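(* Let $n\ge1$. For every assertion $\varphi$, every environment $\eta$ of ordinary variables, every $\rho:\mathsf{AVar}\to\mathsf{IRel}_1$ and every $\rho':\mathsf{AVar}\to\mathsf{IRel}_n$ such that $\Delta_n(\rho(a))=\rho'(a)$ for all $a\in\mathsf{AVar}$, we have $\Delta_n([\![\varphi]\!]^1_{\eta,\rho})=[\![\varphi]\!]^n_{\eta,\rho'}$.
   Context: $\mathsf{Heap}$ is the set of finite partial functions from $\mathsf{PosInt}$ to $\mathsf{Int}$; $[]$ is the empty heap; $h\cdot g$ is the union of heaps with disjoint domains; $g\sqsubseteq h$ means $h$ extends $g$. On $\mathsf{Heap}^n$, $\sqsubseteq$ and $\cdot$ are componentwise. $\mathsf{IRel}_n$ is the set of $\sqsubseteq$-upward closed subsets of $\mathsf{Heap}^n$. For $p,q\in\mathsf{IRel}_n$, $p*q=\{\mathbf f\cdot\mathbf g\mid\mathbf f\in p,\mathbf g\in q,\text{ componentwise disjoint domains}\}$. For $X\subseteq\mathsf{Heap}$, $\Delta_n(X)=\{(h_1,\dots,h_n)\mid\exists f\in X.\ f\sqsubseteq h_k\text{ for all }k\}$. Assertions are built from primitive assertions $P$ (such as $E\hookrightarrow F$ for integer expressions $E,F$, and heap-independent boolean conditions), assertion variables $a\in\mathsf{AVar}$, $\mathsf{true}$, $\mathsf{false}$, $\wedge$, $\vee$, $*$, and quantifiers $\exists x,\forall x$ over ordinary integer variables (no implication or separating implication). An environment $\eta$ maps ordinary variables to integers; each primitive $P$ has a meaning $[\![P]\!]^{\mathrm{prim}}_\eta\subseteq\mathsf{Heap}$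 (e.g. $E\hookrightarrow F$ denotes the heaps $h$ with $[\![E]\!]_\eta\in\operatorname{dom}(h)$ and $h([\![E]\!]_\eta)=[\![F]\!]_\eta$). Given $\eta$ and $\rho:\mathsf{AVar}\to\mathsf{IRel}_n$, the $n$-ary meaning $[\![\varphi]\!]^n_{\eta,\rho}\in\mathsf{IRel}_n$ is: $[\![P]\!]^n=\Delta_n([\![P]\!]^{\mathrm{prim}}_\eta)$, $[\![a]\!]^n=\rho(a)$, $[\![\mathsf{true}]\!]^n=\mathsf{Heap}^n$, $[\![\mathsf{false}]\!]^n=\emptyset$, $\wedge,\vee,*$ are interpreted by $\cap,\cup,*$, $\exists x$ by the union over $v\in\mathsf{Int}$ of the meanings under $\eta[x\mapsto v]$, and $\forall x$ by the corresponding intersection. *)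

theory Defs
  imports Main
begin

typedef heap = "{h :: int \<rightharpoonup> int. finite (dom h) \<and> dom h \<subseteq> {0<..}}"
  by (rule exI[of _ Map.empty]) simp

definition heap_empty :: heap where
  "heap_empty = Abs_heap Map.empty"

definition heap_le :: "heap \<Rightarrow> heap \<Rightarrow> bool" where
  "heap_le g h \<longleftrightarrow> Rep_heap g \<subseteq>\<^sub>m Rep_heap h"

definition heap_disj :: "heap \<Rightarrow> heap \<Rightarrow> bool" where
  "heap_disj f g \<longleftrightarrow> dom (Rep_heap f) \<inter> dom (Rep_heap g) = {}"

text \<open>Union of heaps (meaningful for disjoint domains).\<close>
definition heap_union :: "heap \<Rightarrow> heap \<Rightarrow> heap" where
  "heap_union f g = Abs_heap (Rep_heap f ++ Rep_heap g)"

definition HeapN :: "nat \<Rightarrow> heap list set" where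
  "HeapN n = {hs. length hs = n}"

definition heapN_le :: "heap list \<Rightarrow> heap list \<Rightarrow> bool" where
  "heapN_le gs hs \<longleftrightarrow> length gs = length hs \<and> (\<forall>k < length hs. heap_le (gs ! k) (hs ! k))"

definition IRel :: "nat \<Rightarrow> heap list set set" where
  "IRel n = {p. p \<subseteq> HeapN n \<and> (\<forall>gs hs. gs \<in> p \<longrightarrow> heapN_le gs hs \<longrightarrow> hs \<in> p)}"

definition sep_star :: "nat \<Rightarrow> heap list set \<Rightarrow> heap list set \<Rightarrow> heap list set" where
  "sep_star n p q = {map2 heap_union fs gs | fs gs.
      fs \<in> p \<and> gs \<in> q \<and> length fs = n \<and> length gs = n \<and>
      (\<forall>k < n. heap_disj (fs ! k) (gs ! k))}"

definition Delta :: "nat \<Rightarrow> heap set \<Rightarrow> heap list set" where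
  "Delta n X = {hs. length hs = n \<and> (\<exists>f \<in> X. \<forall>k < n. heap_le f (hs ! k))}"

definition unary :: "heap list set \<Rightarrow> heap set" where
  "unary S = {h. [h] \<in> S}"

datatype ('p, 'v, 'a) assn =
    Prim 'p
  | AVar 'a
  | ATrue
  | AFalse
  | AAnd "('p, 'v, 'a) assn" "('p, 'v, 'a) assn"
  | AOr "('p, 'v, 'a) assn" "('p, 'v, 'a) assn"
  | AStar "('p, 'v, 'a) assn" "('p, 'v, 'a) assn"
  | AEx 'v "('p, 'v, 'a) assn"
  | AAll 'v "('p, 'v, 'a) assn"

fun sem :: "('p \<Rightarrow> ('v \<Rightarrow> int) \<Rightarrow> heap set) \<Rightarrow> nat \<Rightarrow> ('v \<Rightarrow> int) \<Rightarrow>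
    ('a \<Rightarrow> heap list set) \<Rightarrow> ('p, 'v, 'a) assn \<Rightarrow> heap list set" where
  "sem prim n \<eta> \<rho> (Prim P) = Delta n (prim P \<eta>)"
| "sem prim n \<eta> \<rho> (AVar a) = \<rho> a"
| "sem prim n \<eta> \<rho> ATrue = HeapN n"
| "sem prim n \<eta> \<rho> AFalse = {}"
| "sem prim n \<eta> \<rho> (AAnd \<phi> \<psi>) = sem prim n \<eta> \<rho> \<phi> \<inter> sem prim n \<eta> \<rho> \<psi>"
| "sem prim n \<eta> \<rho> (AOr \<phi> \<psi>) = sem prim n \<eta> \<rho> \<phi> \<union> sem prim n \<eta> \<rho> \<psi>"
| "sem prim n \<eta> \<rho> (AStar \<phi> \<psi>) = sep_star n (sem prim n \<eta> \<rho> \<phi>) (sem prim n \<eta> \<rho> \<psi>)"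
| "sem prim n \<eta> \<rho> (AEx x \<phi>) = (\<Union>v. sem prim n (\<eta>(x := v)) \<rho> \<phi>)"
| "sem prim n \<eta> \<rho> (AAll x \<phi>) = (\<Inter>v. sem prim n (\<eta>(x := v)) \<rho> \<phi>)"

end

theory Submission
  imports Defs
begin

text \<open>
  The theorem is proved by
  induction on the assertion, and each connective of the unary semantics is shown to
  commute with \<open>Delta n\<close>:
  \<^item> unions (for disjunction and \<open>\<exists>\<close>) commute with \<open>Delta n\<close> trivially;
  \<^item> intersections of upward-closed sets (for conjunction and \<open>\<forall>\<close>) commute with
    \<open>Delta n\<close> for \<open>n \<ge> 1\<close>, because heaps lying below a common heap have a least upper
    bound;
  \<^item> the unary separating conjunction commutes with the n-ary one for \<open>n \<ge> 1\<close>: an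
    n-tuple above \<open>f \<cdot> g\<close> is split componentwise into \<open>f\<close> and the remainder,
    which lies above \<open>g\<close>.
\<close>

definition heap_restrict :: "heap \<Rightarrow> int set \<Rightarrow> heap" where
  "heap_restrict h A = Abs_heap (Rep_heap h |` A)"

lemma Rep_heap_restrict [simp]: "Rep_heap (heap_restrict h A) = Rep_heap h |` A"
  unfolding heap_restrict_def
proof (rule Abs_heap_inverse)
  have "finite (dom (Rep_heap h))" "dom (Rep_heap h) \<subseteq> {0<..}" using Rep_heap[of h] by auto
  then show "Rep_heap h |` A \<in> {h. finite (dom h) \<and> dom h \<subseteq> {0<..}}"
    by (auto intro: finite_subset)
qed

lemma Rep_heap_union [simp]: "Rep_heap (heap_union f g) = Rep_heap f ++ Rep_heap g"
  unfolding heap_union_def using Rep_heap[of f] Rep_heap[of g]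
  by (intro Abs_heap_inverse) auto

lemma Rep_heap_empty [simp]: "Rep_heap heap_empty = Map.empty"
  unfolding heap_empty_def by (rule Abs_heap_inverse) auto

lemma heap_le_refl: "heap_le f f"
  unfolding heap_le_def by simp

lemma heap_le_trans: "heap_le f g \<Longrightarrow> heap_le g h \<Longrightarrow> heap_le f h"
  unfolding heap_le_def by (rule map_le_trans)

lemma heap_le_empty: "heap_le heap_empty h"
  unfolding heap_le_def by simp

lemma heap_le_union_left: "heap_disj f g \<Longrightarrow> heap_le f (heap_union f g)"
  unfolding heap_le_def heap_disj_def by (metis Rep_heap_union map_add_comm map_le_map_add)

lemma heap_le_union_right: "heap_le g (heap_union f g)"
  unfolding heap_le_def by simp

lemma heap_union_mono:
  assumes "heap_disj F G" "heap_le f F" "heap_le g G"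
  shows "heap_le (heap_union f g) (heap_union F G)"
proof -
  have "heap_le f (heap_union F G)"
    using heap_le_trans[OF assms(2) heap_le_union_left[OF assms(1)]] .
  moreover have "heap_le g (heap_union F G)"
    using heap_le_trans[OF assms(3) heap_le_union_right] .
  ultimately show ?thesis unfolding heap_le_def by (simp add: map_add_le_mapI)
qed

lemma heap_disj_mono: "heap_disj F G \<Longrightarrow> heap_le f F \<Longrightarrow> heap_le g G \<Longrightarrow> heap_disj f g"
  unfolding heap_le_def heap_disj_def using map_le_implies_dom_le by blast

text \<open>If \<open>f \<sqsubseteq> h\<close>
  then \<open>h = f \<cdot> (h - f)\<close>, and \<open>h - f\<close> is the largest heap disjoint from \<open>f\<close> with this
  property, so it extends every \<open>g\<close> with \<open>f \<cdot> g \<sqsubseteq> h\<close>.\<close>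
definition heap_minus :: "heap \<Rightarrow> heap \<Rightarrow> heap" where
  "heap_minus h f = heap_restrict h (- dom (Rep_heap f))"

lemma heap_union_minus:
  assumes "heap_le f h"
  shows "heap_union f (heap_minus h f) = h"
proof -
  have "(Rep_heap f ++ Rep_heap h |` (- dom (Rep_heap f))) x = Rep_heap h x" for x
    using assms unfolding heap_le_def map_le_def
    by (cases "x \<in> dom (Rep_heap f)") (auto simp: map_add_def restrict_map_def split: option.splits)
  then show ?thesis
    by (simp add: heap_minus_def Rep_heap_inject[symmetric] fun_eq_iff)
qed

lemma heap_disj_minus: "heap_disj f (heap_minus h f)"
  unfolding heap_disj_def heap_minus_def by auto

lemma heap_le_minus:
  assumes "heap_disj f g" "heap_le (heap_union f g) h"
  shows "heap_le g (heap_minus h f)"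
  using assms unfolding heap_le_def heap_disj_def heap_minus_def
  by (force simp: map_le_def map_add_def restrict_map_def split: option.splits)

text \<open>A family of heaps with a common upper bound \<open>h\<^sub>0\<close> has a least upper bound:
  the restriction of \<open>h\<^sub>0\<close> to the union of their domains.\<close>
lemma bounded_family_lub:
  fixes F :: "'i \<Rightarrow> heap"
  assumes bound: "\<And>i. heap_le (F i) h0"
  obtains g where "\<And>i. heap_le (F i) g" and "\<And>h. (\<And>i. heap_le (F i) h) \<Longrightarrow> heap_le g h"
proof
  define g where "g = heap_restrict h0 (\<Union>i. dom (Rep_heap (F i)))"
  show upper: "heap_le (F i) g" for i
    using bound[of i] unfolding heap_le_def map_le_def g_def by (auto simp: restrict_map_def)
  show "heap_le g h" if "\<And>i. heap_le (F i) h" for h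
    unfolding heap_le_def map_le_def
  proof
    fix x assume "x \<in> dom (Rep_heap g)"
    then obtain i where "x \<in> dom (Rep_heap (F i))"
      unfolding g_def by (auto simp: restrict_map_def split: if_splits)
    then show "Rep_heap g x = Rep_heap h x"
      using upper[of i] that[of i] unfolding heap_le_def map_le_def by metis
  qed
qed

definition upc :: "heap set \<Rightarrow> bool" where
  "upc X \<longleftrightarrow> (\<forall>f g. f \<in> X \<longrightarrow> heap_le f g \<longrightarrow> g \<in> X)"

definition heap_star :: "heap set \<Rightarrow> heap set \<Rightarrow> heap set" where
  "heap_star A B = {heap_union f g | f g. f \<in> A \<and> g \<in> B \<and> heap_disj f g}"

lemma upc_Int: "upc A \<Longrightarrow> upc B \<Longrightarrow> upc (A \<inter> B)"
  and upc_Un: "upc A \<Longrightarrow> upc B \<Longrightarrow> upc (A \<union> B)"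
  and upc_UN: "(\<And>i. upc (X i)) \<Longrightarrow> upc (\<Union>i. X i)"
  and upc_INT: "(\<And>i. upc (X i)) \<Longrightarrow> upc (\<Inter>i. X i)"
  and upc_UNIV: "upc UNIV"
  and upc_empty: "upc {}"
  unfolding upc_def by blast+

lemma upc_upclose: "upc {h. \<exists>f\<in>X. heap_le f h}"
  unfolding upc_def using heap_le_trans by blast

text \<open>A heap above \<open>f \<cdot> g\<close> splits as \<open>f \<cdot> (h - f)\<close> with \<open>g \<sqsubseteq> h - f\<close>.\<close>
lemma upc_heap_star:
  assumes "upc A" "upc B"
  shows "upc (heap_star A B)"
  unfolding upc_def
proof (intro allI impI)
  fix h h' assume "h \<in> heap_star A B" and le: "heap_le h h'"
  then obtain f g where h: "h = heap_union f g" and fg: "f \<in> A" "g \<in> B" "heap_disj f g"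
    unfolding heap_star_def by blast
  have "heap_le f h'" using heap_le_trans[OF heap_le_union_left[OF fg(3)]] le h by blast
  then have "h' = heap_union f (heap_minus h' f)" by (simp add: heap_union_minus)
  moreover have "heap_minus h' f \<in> B"
    using assms(2) fg heap_le_minus le h unfolding upc_def by blast
  ultimately show "h' \<in> heap_star A B"
    using fg(1) heap_disj_minus unfolding heap_star_def by blast
qed

text \<open>\<open>Delta n X\<close> is already upward closed in its witnesses, so upward-closing
  \<open>X\<close> first does not change it.\<close>
lemma Delta_upclose: "Delta n {h. \<exists>f\<in>X. heap_le f h} = Delta n X"
  unfolding Delta_def using heap_le_refl heap_le_trans by blast

lemma Delta_UNIV: "Delta n UNIV = HeapN n"
  unfolding Delta_def HeapN_def using heap_le_empty by blast

lemma Delta_empty: "Delta n {} = {}"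
  and Delta_Un: "Delta n (A \<union> B) = Delta n A \<union> Delta n B"
  and Delta_UN: "Delta n (\<Union>i. X i) = (\<Union>i. Delta n (X i))"
  unfolding Delta_def by blast+

text \<open>For intersections, the witnesses below a given tuple are all below its first
  component, so their least upper bound is a common witness (this needs \<open>n \<ge> 1\<close>).\<close>
lemma Delta_INT:
  assumes "n \<ge> 1" "\<And>i. upc (X i)"
  shows "Delta n (\<Inter>i. X i) = (\<Inter>i. Delta n (X i))"
proof
  show "Delta n (\<Inter>i. X i) \<subseteq> (\<Inter>i. Delta n (X i))" unfolding Delta_def by blast
next
  show "(\<Inter>i. Delta n (X i)) \<subseteq> Delta n (\<Inter>i. X i)"
  proof
    fix hs assume hs: "hs \<in> (\<Inter>i. Delta n (X i))"
    then have "\<forall>i. \<exists>f\<in>X i. \<forall>k<n. heap_le f (hs ! k)" unfolding Delta_def by blast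
    then obtain F where F: "\<And>i. F i \<in> X i" "\<And>i k. k < n \<Longrightarrow> heap_le (F i) (hs ! k)" by metis
    obtain g where upper: "\<And>i. heap_le (F i) g"
      and least: "\<And>h. (\<And>i. heap_le (F i) h) \<Longrightarrow> heap_le g h"
      using bounded_family_lub[of F "hs ! 0"] F(2) assms(1) by auto
    have "g \<in> (\<Inter>i. X i)" using assms(2) F(1) upper unfolding upc_def by blast
    moreover have "\<forall>k<n. heap_le g (hs ! k)" using least F(2) by blast
    moreover have "length hs = n" using hs unfolding Delta_def by blast
    ultimately show "hs \<in> Delta n (\<Inter>i. X i)" unfolding Delta_def by blast
  qed
qed

text \<open>The binary case, as an intersection indexed by the booleans.\<close>
lemma Delta_Int:
  assumes "n \<ge> 1" "upc A" "upc B"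
  shows "Delta n (A \<inter> B) = Delta n A \<inter> Delta n B"
proof -
  have "A \<inter> B = (\<Inter>b. if b then A else B)" "Delta n A \<inter> Delta n B = (\<Inter>b. Delta n (if b then A else B))"
    by (auto split: if_splits)
  then show ?thesis using Delta_INT[of n "\<lambda>b. if b then A else B"] assms by simp
qed

text \<open>Splitting: a tuple above \<open>f \<cdot> g\<close> is \<open>(f, \<dots>, f) \<cdot> (h\<^sub>1 - f, \<dots>, h\<^sub>n - f)\<close>.\<close>
lemma Delta_heap_star_le: "Delta n (heap_star A B) \<subseteq> sep_star n (Delta n A) (Delta n B)"
proof
  fix hs assume "hs \<in> Delta n (heap_star A B)"
  then obtain f g where len: "length hs = n" and fg: "f \<in> A" "g \<in> B" "heap_disj f g"
    and le: "\<And>k. k < n \<Longrightarrow> heap_le (heap_union f g) (hs ! k)"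
    unfolding Delta_def heap_star_def by blast
  define fs where "fs = replicate n f"
  define gs where "gs = map (\<lambda>h. heap_minus h f) hs"
  have lens: "length fs = n" "length gs = n" unfolding fs_def gs_def using len by simp_all
  have "fs \<in> Delta n A"
    unfolding Delta_def using lens fg(1) heap_le_refl by (auto simp: fs_def)
  moreover have "gs \<in> Delta n B"
  proof -
    have "\<forall>k<n. heap_le g (gs ! k)"
      using heap_le_minus[OF fg(3) le] len by (simp add: gs_def)
    then show ?thesis unfolding Delta_def using lens fg(2) by blast
  qed
  moreover have "hs = map2 heap_union fs gs"
  proof (rule nth_equalityI)
    fix k assume k: "k < length hs"
    then have "heap_le f (hs ! k)"
      using heap_le_trans[OF heap_le_union_left[OF fg(3)] le] len by blast
    then show "hs ! k = map2 heap_union fs gs ! k"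
      using k len by (simp add: fs_def gs_def heap_union_minus)
  qed (simp add: lens len)
  moreover have "\<forall>k<n. heap_disj (fs ! k) (gs ! k)"
    using len heap_disj_minus by (simp add: fs_def gs_def)
  ultimately show "hs \<in> sep_star n (Delta n A) (Delta n B)"
    unfolding sep_star_def using lens by blast
qed

text \<open>Gluing: witnesses \<open>f \<sqsubseteq> f\<^sub>k\<close>, \<open>g \<sqsubseteq> g\<^sub>k\<close> are disjoint (by the first component,
  needing \<open>n \<ge> 1\<close>), and \<open>f \<cdot> g \<sqsubseteq> f\<^sub>k \<cdot> g\<^sub>k\<close> for all \<open>k\<close>.\<close>
lemma sep_star_Delta_le:
  assumes "n \<ge> 1"
  shows "sep_star n (Delta n A) (Delta n B) \<subseteq> Delta n (heap_star A B)"
proof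
  fix hs assume "hs \<in> sep_star n (Delta n A) (Delta n B)"
  then obtain fs gs where hs: "hs = map2 heap_union fs gs" and fs: "fs \<in> Delta n A"
    and gs: "gs \<in> Delta n B" and lens: "length fs = n" "length gs = n"
    and disj: "\<forall>k<n. heap_disj (fs ! k) (gs ! k)"
    unfolding sep_star_def by blast
  obtain f where f: "f \<in> A" "\<forall>k<n. heap_le f (fs ! k)" using fs unfolding Delta_def by blast
  obtain g where g: "g \<in> B" "\<forall>k<n. heap_le g (gs ! k)" using gs unfolding Delta_def by blast
  have "heap_disj f g" using heap_disj_mono disj f(2) g(2) assms by auto
  then have "heap_union f g \<in> heap_star A B" using f(1) g(1) unfolding heap_star_def by blast
  moreover have "\<forall>k<n. heap_le (heap_union f g) (hs ! k)"
    using heap_union_mono disj f(2) g(2) hs lens by simp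
  ultimately show "hs \<in> Delta n (heap_star A B)" using hs lens unfolding Delta_def by auto
qed

lemma Delta_heap_star:
  "n \<ge> 1 \<Longrightarrow> Delta n (heap_star A B) = sep_star n (Delta n A) (Delta n B)"
  using Delta_heap_star_le sep_star_Delta_le by blast

lemma unary_Int: "unary (A \<inter> B) = unary A \<inter> unary B"
  and unary_Un: "unary (A \<union> B) = unary A \<union> unary B"
  and unary_UN: "unary (\<Union>i. X i) = (\<Union>i. unary (X i))"
  and unary_INT: "unary (\<Inter>i. X i) = (\<Inter>i. unary (X i))"
  and unary_empty: "unary {} = {}"
  and unary_HeapN: "unary (HeapN 1) = UNIV"
  and unary_Delta: "unary (Delta 1 Y) = {h. \<exists>f\<in>Y. heap_le f h}"
  unfolding unary_def HeapN_def Delta_def by auto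

lemma unary_sep_star: "unary (sep_star 1 p q) = heap_star (unary p) (unary q)"
proof (rule set_eqI)
  fix h
  have "[h] \<in> sep_star 1 p q \<longleftrightarrow>
      (\<exists>f g. h = heap_union f g \<and> [f] \<in> p \<and> [g] \<in> q \<and> heap_disj f g)"
  proof
    assume "[h] \<in> sep_star 1 p q"
    then show "\<exists>f g. h = heap_union f g \<and> [f] \<in> p \<and> [g] \<in> q \<and> heap_disj f g"
      unfolding sep_star_def by (clarsimp simp: length_Suc_conv) blast
  next
    assume "\<exists>f g. h = heap_union f g \<and> [f] \<in> p \<and> [g] \<in> q \<and> heap_disj f g"
    then obtain f g where "h = heap_union f g" "[f] \<in> p" "[g] \<in> q" "heap_disj f g" by blast
    then have "[h] = map2 heap_union [f] [g] \<and> [f] \<in> p \<and> [g] \<in> q \<and> length [f] = 1 \<and>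
        length [g] = 1 \<and> (\<forall>k<1. heap_disj ([f] ! k) ([g] ! k))"
      by simp
    then show "[h] \<in> sep_star 1 p q"
      unfolding sep_star_def mem_Collect_eq by (intro exI[of _ "[f]"] exI[of _ "[g]"])
  qed
  then show "h \<in> unary (sep_star 1 p q) \<longleftrightarrow> h \<in> heap_star (unary p) (unary q)"
    unfolding unary_def heap_star_def by simp
qed

lemma upc_unary_IRel: "p \<in> IRel 1 \<Longrightarrow> upc (unary p)"
  unfolding upc_def unary_def IRel_def heapN_le_def by auto

lemma upc_sem1:
  assumes "\<And>a. \<rho> a \<in> IRel 1"
  shows "upc (unary (sem prim 1 \<eta> \<rho> \<phi>))"
  by (induction \<phi> arbitrary: \<eta>)
    (simp_all only: sem.simps upc_unary_IRel[OF assms] unary_Delta upc_upclose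
       unary_HeapN upc_UNIV unary_empty upc_empty unary_Int upc_Int unary_Un upc_Un
       unary_sep_star upc_heap_star unary_UN upc_UN unary_INT upc_INT)

theorem mainTheorem2:
  fixes prim :: "'p \<Rightarrow> ('v \<Rightarrow> int) \<Rightarrow> heap set"
    and \<phi> :: "('p, 'v, 'a) assn"
    and \<eta> :: "'v \<Rightarrow> int"
    and \<rho> \<rho>' :: "'a \<Rightarrow> heap list set"
    and n :: nat
  assumes "n \<ge> 1"
    and "\<And>a. \<rho> a \<in> IRel 1"
    and "\<And>a. \<rho>' a \<in> IRel n"
    and "\<And>a. Delta n (unary (\<rho> a)) = \<rho>' a"
  shows "Delta n (unary (sem prim 1 \<eta> \<rho> \<phi>)) = sem prim n \<eta> \<rho>' \<phi>"
  by (induction \<phi> arbitrary: \<eta>)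
    (simp_all only: sem.simps assms(4) unary_Delta Delta_upclose unary_HeapN Delta_UNIV
       unary_empty Delta_empty unary_Int Delta_Int[OF assms(1)] unary_Un Delta_Un
       unary_sep_star Delta_heap_star[OF assms(1)] unary_UN Delta_UN unary_INT Delta_INT[OF assms(1)]
       upc_sem1[where \<rho> = \<rho>, OF assms(2)])

end
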